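(* Let $H$ be a Hilbert space, $\varrho\in\mathbb{R}_{>0}$, and let $F,G:H_{\varrho,0}(\mathbb{R})\otimes H\to H_{\varrho,-1}(\mathbb{R})\otimes H$ be Lipschitz continuous with $$\frac{|F|_{\mathrm{Lip}}+|G|_{\mathrm{Lip}}}{2}<1.$$ Let $u,v\in H_{\varrho,0}(\mathbb{R})\otimes H$ satisfy $\partial_{0,\varrho}u=F(u)$ and $\partial_{0,\varrho}v=G(v)$. Then $$|u-v|_{\varrho,0}\le\frac{1}{1-\frac{|F|_{\mathrm{Lip}}+|G|_{\mathrm{Lip}}}{2}}\sup_{x\in H_{\varrho,0}(\mathbb{R})\otimes H}|F(x)-G(x)|_{\varrho,-1}.$$
   Context: $H$ is a Hilbert space. For $\varrho\in\mathbb{R}$, $H_{\varrho,0}(\mathbb{R})\otimes H$ is the Hilbert space of (classes of) measurable $f:\mathbb{R}\to H$ with $|f|_{\varrho,0}^2=\int_{\mathbb{R}}|f(t)|_H^2e^{-2\varrho t}dt<\infty$. For $\varrho\ne0$, $\partial_{0,\varrho}$ is the (distributional) derivative in $H_{\varrho,0}(\mathbb{R})\otimes H$ with maximal domain $H_{\varrho,1}(\mathbb{R})\otimes H$, normed by $|f|_{\varrho,1}=|\partial_{0,\varrho}f|_{\varrho,0}$. $H_{\varrho,-1}(\mathbb{R})\otimes H$ is the dual of $H_{-\varrho,1}(\mathbb{R})\otimes H$ (norm $|\cdot|_{\varrho,-1}$), containing $H_{\varrho,0}(\mathbb{R})\otimes H$ via $f\mapsto(\psi\mapsto\int\langle f(t),\psi(t)\rangle_Hdt)$,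 and $\partial_{0,\varrho}$ extends to a unitary operator from $H_{\varrho,0}(\mathbb{R})\otimes H$ onto $H_{\varrho,-1}(\mathbb{R})\otimes H$. $|F|_{\mathrm{Lip}}$ denotes the best Lipschitz constant of $F$. *)

theory Defs
  imports "HOL-Analysis.Analysis"
begin

text \<open>Weighted space H_{rho,0}(R) (x) H: strongly measurable (Borel measurable and
  essentially separably valued) functions with finite weighted L2 norm.\<close>
definition wL2 :: "real \<Rightarrow> (real \<Rightarrow> 'h::real_inner) set" where
  "wL2 \<rho> = {f. f \<in> borel_measurable lborel
              \<and> (\<exists>D. countable D \<and> (AE t in lborel. f t \<in> closure D))
              \<and> integrable lborel (\<lambda>t. (norm (f t))\<^sup>2 * exp (-2 * \<rho> * t))}"

definition wnorm :: "real \<Rightarrow> (real \<Rightarrow> 'h::real_inner) \<Rightarrow> real" where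
  "wnorm \<rho> f = sqrt (\<integral>t. (norm (f t))\<^sup>2 * exp (-2 * \<rho> * t) \<partial>lborel)"

text \<open>Test functions C_c^infinity(R): eta with derivative sequence Dk, Dk 0 = eta,
  Dk (Suc n) the derivative of Dk n, and eta has compact support.\<close>
definition test_fun :: "(real \<Rightarrow> real) \<Rightarrow> (nat \<Rightarrow> real \<Rightarrow> real) \<Rightarrow> bool" where
  "test_fun \<eta> Dk \<longleftrightarrow> Dk 0 = \<eta>
     \<and> (\<forall>n t. (Dk n has_real_derivative Dk (Suc n) t) (at t))
     \<and> (\<exists>R. \<forall>t. \<bar>t\<bar> > R \<longrightarrow> \<eta> t = 0)"

definition weak_deriv :: "(real \<Rightarrow> 'h::real_inner) \<Rightarrow> (real \<Rightarrow> 'h) \<Rightarrow> bool" where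
  "weak_deriv \<psi> \<psi>' \<longleftrightarrow> (\<forall>\<eta> Dk h. test_fun \<eta> Dk \<longrightarrow>
      (\<integral>t. inner (\<psi> t) h * Dk 1 t \<partial>lborel) = - (\<integral>t. inner (\<psi>' t) h * \<eta> t \<partial>lborel))"

text \<open>H_{rho,1}(R) (x) H as pairs (psi, derivative of psi); its norm is wnorm rho psi'.\<close>
definition wH1 :: "real \<Rightarrow> ((real \<Rightarrow> 'h::real_inner) \<times> (real \<Rightarrow> 'h)) set" where
  "wH1 \<rho> = {(\<psi>, \<psi>'). \<psi> \<in> wL2 \<rho> \<and> \<psi>' \<in> wL2 \<rho> \<and> weak_deriv \<psi> \<psi>'}"

text \<open>H_{rho,-1}(R) (x) H: continuous linear functionals on H_{-rho,1}(R) (x) H.\<close>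
definition wHm1 :: "real \<Rightarrow> ((real \<Rightarrow> 'h::real_inner) \<Rightarrow> real) set" where
  "wHm1 \<rho> = {\<phi>. (\<forall>(\<psi>1, \<psi>1') \<in> wH1 (-\<rho>). \<forall>(\<psi>2, \<psi>2') \<in> wH1 (-\<rho>). \<forall>a b.
                   \<phi> (\<lambda>t. a *\<^sub>R \<psi>1 t + b *\<^sub>R \<psi>2 t) = a * \<phi> \<psi>1 + b * \<phi> \<psi>2)
              \<and> (\<exists>C. \<forall>(\<psi>, \<psi>') \<in> wH1 (-\<rho>). \<bar>\<phi> \<psi>\<bar> \<le> C * wnorm (-\<rho>) \<psi>')}"

definition dnorm :: "real \<Rightarrow> ((real \<Rightarrow> 'h::real_inner) \<Rightarrow> real) \<Rightarrow> real" where
  "dnorm \<rho> \<phi> = Sup {\<bar>\<phi> \<psi>\<bar> | \<psi> \<psi>'. (\<psi>, \<psi>') \<in> wH1 (-\<rho>) \<and> wnorm (-\<rho>) \<psi>' \<le> 1}"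

text \<open>The extension of the time derivative: for u in H_{rho,0}, the element
  partial_{0,rho} u of H_{rho,-1} is psi |-> - int <u, psi'>. The predicate says
  partial_{0,rho} u = Phi in H_{rho,-1}.\<close>
definition deriv_eq :: "real \<Rightarrow> (real \<Rightarrow> 'h::real_inner) \<Rightarrow> ((real \<Rightarrow> 'h) \<Rightarrow> real) \<Rightarrow> bool" where
  "deriv_eq \<rho> u \<Phi> \<longleftrightarrow> (\<forall>(\<psi>, \<psi>') \<in> wH1 (-\<rho>).
      \<Phi> \<psi> = - (\<integral>t. inner (u t) (\<psi>' t) \<partial>lborel))"

definition lip_bound :: "real \<Rightarrow> ((real \<Rightarrow> 'h::real_inner) \<Rightarrow> ((real \<Rightarrow> 'h) \<Rightarrow> real)) \<Rightarrow> real \<Rightarrow> bool" where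
  "lip_bound \<rho> F L \<longleftrightarrow> (\<forall>x \<in> wL2 \<rho>. \<forall>y \<in> wL2 \<rho>.
      dnorm \<rho> (\<lambda>\<psi>. F x \<psi> - F y \<psi>) \<le> L * wnorm \<rho> (\<lambda>t. x t - y t))"

definition lip_const :: "real \<Rightarrow> ((real \<Rightarrow> 'h::real_inner) \<Rightarrow> ((real \<Rightarrow> 'h) \<Rightarrow> real)) \<Rightarrow> real" where
  "lip_const \<rho> F = Inf {L. L \<ge> 0 \<and> lip_bound \<rho> F L}"

end

theory Submission
  imports Defs
begin

text \<open>Only one half of the unitarity of \<open>\<partial>\<^sub>0\<^sub>,\<^sub>\<rho>\<close> is needed:
  \<open>|w|\<^sub>\<rho>\<^sub>,\<^sub>0 \<le> |\<partial>\<^sub>0\<^sub>,\<^sub>\<rho> w|\<^sub>\<rho>\<^sub>,\<^sub>-\<^sub>1\<close> for \<open>w = u - v\<close>. It is obtained by testing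
  \<open>\<partial>\<^sub>0\<^sub>,\<^sub>\<rho> w\<close> against functions \<open>\<psi> \<in> H\<^sub>-\<^sub>\<rho>\<^sub>,\<^sub>1\<close> whose derivative approximates
  \<open>exp (-2 \<rho> t) w(t)\<close>. Taking that derivative to be a weighted simple function of compact
  support, \<open>\<psi>\<close> is a finite sum of real primitives times fixed vectors, so no vector-valued
  integration in the (possibly non-separable) space \<open>H\<close> is needed; strong measurability of \<open>w\<close>
  makes such approximations possible.

  Writing \<open>F u - G v\<close> once as \<open>(F u - F v) + (F v - G v)\<close> and once as
  \<open>(F u - G u) + (G u - G v)\<close> and averaging gives
  \<open>|u - v| \<le> (|F|\<^sub>L\<^sub>i\<^sub>p + |G|\<^sub>L\<^sub>i\<^sub>p)/2 |u - v| + sup\<^sub>x |F x - G x|\<^sub>\<rho>\<^sub>,\<^sub>-\<^sub>1\<close>,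
  which rearranges to the claim.\<close>

lemma borel_measurable_comb_simple_function:
  fixes f :: "'a \<Rightarrow> 'b::topological_space" and s :: "'a \<Rightarrow> 'c"
    and H :: "'b \<Rightarrow> 'c \<Rightarrow> 'd::topological_space"
  assumes f: "f \<in> borel_measurable M" and s: "simple_function M s"
    and H: "\<And>v. continuous_on UNIV (\<lambda>x. H x v)"
  shows "(\<lambda>t. H (f t) (s t)) \<in> borel_measurable M"
proof (rule borel_measurableI)
  fix S :: "'d set" assume S: "open S"
  have eq: "(\<lambda>t. H (f t) (s t)) -` S \<inter> space M =
     (\<Union>v\<in>s ` space M. (s -` {v} \<inter> space M) \<inter> ((\<lambda>t. H (f t) v) -` S \<inter> space M))"
    by auto
  have "(\<lambda>t. H (f t) v) -` S \<inter> space M \<in> sets M" for v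
    using S borel_measurable_continuous_on[OF H f] by (simp add: measurable_sets)
  then show "(\<lambda>t. H (f t) (s t)) -` S \<inter> space M \<in> sets M"
    unfolding eq using simple_functionD[OF s] by (intro sets.finite_UN) auto
qed

lemma integrable_bounded_compact_support:
  fixes g :: "real \<Rightarrow> real"
  assumes g: "g \<in> borel_measurable lborel" and B: "\<And>t. \<bar>g t\<bar> \<le> B"
    and n: "\<And>t. \<bar>t\<bar> > n \<Longrightarrow> g t = 0"
  shows "integrable lborel g"
proof (rule Bochner_Integration.integrable_bound)
  show "integrable lborel (\<lambda>x. indicator {-n..n} x *\<^sub>R B)"
    by (intro integrable_indicator) (auto simp: emeasure_lborel_Icc_eq)
  show "AE x in lborel. norm (g x) \<le> norm (indicator {-n..n} x *\<^sub>R B)"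
  proof (rule AE_I2)
    show "norm (g x) \<le> norm (indicator {-n..n} x *\<^sub>R B)" for x
      using B[of x] n[of x] by (cases "x \<in> {-n..n}") (auto simp: abs_le_iff)
  qed
qed (rule g)

lemma integrable_indicator_atMost_exp:
  fixes a c :: real
  assumes "c > 0"
  shows "integrable lborel (\<lambda>x. indicator {..a} x * exp (c * x))"
proof -
  have "(\<lambda>x. exp (- c * x)) absolutely_integrable_on {-a..}"
    using integrable_on_exp_minus_to_infinity[OF assms, of "-a"]
    by (intro nonnegative_absolutely_integrable_1) auto
  then have "integrable lborel (\<lambda>x. indicator {-a..} x * exp (- c * x))"
    by (simp add: set_integrable_def integrable_completion)
  also have "(\<lambda>x. indicator {-a..} x * exp (- c * x)) = (\<lambda>x. (\<lambda>y. indicator {..a} y * exp (c * y)) (0 + (-1) * x))"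
    by (simp add: fun_eq_iff indicator_def minus_le_iff)
  finally show ?thesis
    using lborel_integrable_real_affine_iff[of "-1" "\<lambda>y. indicator {..a} y * exp (c * y)" 0] by simp
qed

lemma continuous_in_closure_image:
  assumes "continuous_on UNIV H" "x \<in> closure D"
  shows "H x \<in> closure (H ` D)"
proof -
  have "H ` closure D \<subseteq> closure (H ` D)"
    using assms(1) by (intro image_closure_subset closure_subset) (auto intro: continuous_on_subset)
  then show ?thesis using assms(2) by auto
qed

section \<open>Test functions and primitives\<close>

lemma test_fun_deriv:
  "test_fun \<eta> Dk \<Longrightarrow> (Dk k has_real_derivative Dk (Suc k) t) (at t)"
  unfolding test_fun_def by blast

lemma test_fun_continuous:
  "test_fun \<eta> Dk \<Longrightarrow> continuous_on UNIV (Dk k)"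
  using DERIV_isCont[OF test_fun_deriv] by (blast intro: continuous_at_imp_continuous_on)

lemma test_fun_support:
  assumes tf: "test_fun \<eta> Dk"
  obtains R where "R \<ge> 0" "\<And>k t. \<bar>t\<bar> > R \<Longrightarrow> Dk k t = 0"
proof -
  from tf obtain R0 where R0: "\<And>t. \<bar>t\<bar> > R0 \<Longrightarrow> Dk 0 t = 0"
    unfolding test_fun_def by blast
  have "Dk k t = 0" if "\<bar>t\<bar> > \<bar>R0\<bar>" for k t
    using that
  proof (induction k arbitrary: t)
    case 0
    then show ?case using R0 by simp
  next
    case (Suc k)
    show ?case
    proof (rule DERIV_local_const)
      show "(Dk k has_real_derivative Dk (Suc k) t) (at t)" by (rule test_fun_deriv[OF tf])
      show "0 < \<bar>t\<bar> - \<bar>R0\<bar>" using Suc.prems by simp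
      show "\<forall>y. \<bar>t - y\<bar> < \<bar>t\<bar> - \<bar>R0\<bar> \<longrightarrow> Dk k t = Dk k y"
      proof (intro allI impI)
        fix y assume "\<bar>t - y\<bar> < \<bar>t\<bar> - \<bar>R0\<bar>"
        then have "\<bar>y\<bar> > \<bar>R0\<bar>" by arith
        then show "Dk k t = Dk k y" using Suc by simp
      qed
    qed
  qed
  then show ?thesis using that[of "\<bar>R0\<bar>"] by simp
qed

lemma test_fun_bounded:
  assumes tf: "test_fun \<eta> Dk"
  obtains C where "\<And>t. \<bar>Dk k t\<bar> \<le> C"
proof -
  obtain R where R: "\<And>k t. \<bar>t\<bar> > R \<Longrightarrow> Dk k t = 0"
    using test_fun_support[OF tf] by blast
  have "compact (Dk k ` {-R..R})"
    using test_fun_continuous[OF tf] by (intro compact_continuous_image) (auto intro: continuous_on_subset)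
  then obtain a where a: "\<And>x. x \<in> Dk k ` {-R..R} \<Longrightarrow> norm x \<le> a"
    using compact_imp_bounded bounded_iff by metis
  have "\<bar>Dk k t\<bar> \<le> \<bar>a\<bar>" for t
  proof (cases "\<bar>t\<bar> > R")
    case False
    then have "t \<in> {-R..R}" by auto
    then show ?thesis using a[OF imageI] by force
  qed (simp add: R)
  then show ?thesis using that by blast
qed

lemma test_fun_integral_atMost:
  assumes tf: "test_fun \<eta> Dk"
  shows "(\<integral>t. indicator {..x} t * Dk 1 t \<partial>lborel) = \<eta> x"
proof -
  obtain R where R: "R \<ge> 0" "\<And>k t. \<bar>t\<bar> > R \<Longrightarrow> Dk k t = 0"
    using test_fun_support[OF tf] by blast
  have D0: "Dk 0 = \<eta>" using tf unfolding test_fun_def by blast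
  define a where "a = - (R + \<bar>x\<bar> + 1)"
  have ax: "a \<le> x" and Ra: "\<bar>a\<bar> > R" unfolding a_def using R(1) by linarith+
  have "(\<lambda>t. indicator {..x} t * Dk 1 t) = (\<lambda>t. indicator {a..x} t *\<^sub>R Dk 1 t)"
  proof
    fix t
    show "indicator {..x} t * Dk 1 t = indicator {a..x} t *\<^sub>R Dk 1 t"
    proof (cases "t < a")
      case True
      then have "\<bar>t\<bar> > R" unfolding a_def using R(1) by linarith
      then show ?thesis using R(2) by simp
    qed (simp add: indicator_def)
  qed
  then have "(\<integral>t. indicator {..x} t * Dk 1 t \<partial>lborel) = (\<integral>t. indicator {a..x} t *\<^sub>R Dk 1 t \<partial>lborel)"
    by simp
  also have "\<dots> = \<eta> x - \<eta> a"
  proof (rule integral_FTC_atLeastAtMost[OF ax])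
    fix y
    show "(\<eta> has_vector_derivative Dk 1 y) (at y within {a..x})"
      using test_fun_deriv[OF tf, of 0 y] D0
      by (simp add: has_real_derivative_iff_has_vector_derivative[symmetric] has_field_derivative_at_within)
    show "continuous_on {a..x} (Dk 1)"
      using test_fun_continuous[OF tf] by (rule continuous_on_subset) auto
  qed
  also have "\<eta> a = 0" using R(2)[OF Ra, of 0] D0 by simp
  finally show ?thesis by simp
qed

definition primitive_at_top :: "(real \<Rightarrow> real) \<Rightarrow> real \<Rightarrow> real" where
  "primitive_at_top g t = - (\<integral>x. indicator {t..} x * g x \<partial>lborel)"

context
  fixes g :: "real \<Rightarrow> real" and B n :: real
  assumes g_meas: "g \<in> borel_measurable lborel"
    and g_bound: "\<And>t. \<bar>g t\<bar> \<le> B"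
    and g_support: "\<And>t. \<bar>t\<bar> > n \<Longrightarrow> g t = 0"
begin

lemma integrable_indicator_times:
  "A \<in> sets borel \<Longrightarrow> integrable lborel (\<lambda>x. indicator A x * g x)"
  using integrable_real_mult_indicator[of A lborel g]
    integrable_bounded_compact_support[OF g_meas g_bound g_support]
  by (simp add: mult.commute)

lemma primitive_at_top_lipschitz: "B-lipschitz_on UNIV (primitive_at_top g)"
proof -
  have le: "\<bar>primitive_at_top g t - primitive_at_top g t'\<bar> \<le> B * (t' - t)" if "t \<le> t'" for t t'
  proof -
    let ?f = "\<lambda>x. indicator {t'..} x * g x - indicator {t..} x * g x"
    have "primitive_at_top g t - primitive_at_top g t' = (\<integral>x. ?f x \<partial>lborel)"
      unfolding primitive_at_top_def by (simp add: integrable_indicator_times)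
    then have "\<bar>primitive_at_top g t - primitive_at_top g t'\<bar> \<le> (\<integral>x. norm (?f x) \<partial>lborel)"
      using integral_norm_bound[of lborel ?f] by simp
    also have "\<dots> \<le> (\<integral>x. indicator {t..t'} x * B \<partial>lborel)"
    proof (rule integral_mono)
      show "integrable lborel (\<lambda>x. indicator {t..t'} x * B)"
        using integrable_indicator[of "{t..t'}" lborel B] by (simp add: emeasure_lborel_Icc_eq)
      show "norm (?f x) \<le> indicator {t..t'} x * B" for x
        using g_bound[of x] that by (auto simp: indicator_def)
    qed (simp add: integrable_indicator_times)
    also have "\<dots> = B * (t' - t)" using that by simp
    finally show ?thesis .
  qed
  show ?thesis
  proof (rule lipschitz_onI)
    show "dist (primitive_at_top g t) (primitive_at_top g t') \<le> B * dist t t'" for t t'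
      using le[of t t'] le[of t' t] by (cases "t \<le> t'") (auto simp: dist_real_def abs_minus_commute)
    show "0 \<le> B" using g_bound[of 0] by simp
  qed
qed

lemma continuous_primitive_at_top: "continuous_on UNIV (primitive_at_top g)"
  by (rule lipschitz_on_continuous_on[OF primitive_at_top_lipschitz])

lemma primitive_at_top_bound: "\<bar>primitive_at_top g t\<bar> \<le> B * (2 * \<bar>n\<bar> + 1)"
proof -
  have "\<bar>primitive_at_top g t\<bar> \<le> (\<integral>x. norm (indicator {t..} x * g x) \<partial>lborel)"
    unfolding primitive_at_top_def using integral_norm_bound[of lborel "\<lambda>x. indicator {t..} x * g x"]
    by simp
  also have "\<dots> \<le> (\<integral>x. indicator {-\<bar>n\<bar>..\<bar>n\<bar>} x * B \<partial>lborel)"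
  proof (rule integral_mono)
    show "integrable lborel (\<lambda>x. indicator {-\<bar>n\<bar>..\<bar>n\<bar>} x * B)"
      using integrable_indicator[of "{-\<bar>n\<bar>..\<bar>n\<bar>}" lborel B] by (simp add: emeasure_lborel_Icc_eq)
    show "norm (indicator {t..} x * g x) \<le> indicator {-\<bar>n\<bar>..\<bar>n\<bar>} x * B" for x
      using g_bound[of x] g_support[of x] g_bound[of 0] by (auto simp: indicator_def abs_le_iff)
  qed (simp add: integrable_indicator_times)
  also have "\<dots> \<le> B * (2 * \<bar>n\<bar> + 1)"
    using order_trans[OF abs_ge_zero g_bound] by (simp add: algebra_simps)
  finally show ?thesis .
qed

lemma primitive_at_top_eq_0:
  assumes "t > \<bar>n\<bar>"
  shows "primitive_at_top g t = 0"
proof -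
  have "(\<lambda>x. indicator {t..} x * g x) = (\<lambda>x. 0)"
    using g_support assms by (auto simp: fun_eq_iff indicator_def)
  then show ?thesis by (simp add: primitive_at_top_def)
qed

lemma integral_swap_halfplane:
  fixes h :: "real \<Rightarrow> real" and C R :: real
  assumes h_meas: "h \<in> borel_measurable lborel" and h_bound: "\<And>t. \<bar>h t\<bar> \<le> C"
    and h_support: "\<And>t. \<bar>t\<bar> > R \<Longrightarrow> h t = 0"
  shows "(\<integral>x. g x * (\<integral>t. indicator {..x} t * h t \<partial>lborel) \<partial>lborel)
       = (\<integral>t. h t * (\<integral>x. indicator {t..} x * g x \<partial>lborel) \<partial>lborel)"
proof -
  define f where "f = (\<lambda>t x. indicator {t..} x * g x * h t)"
  have B0: "0 \<le> B" and C0: "0 \<le> C" using g_bound[of 0] h_bound[of 0] by simp_all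
  have "case_prod f = (\<lambda>p. indicator {p. fst p \<le> snd p} p * g (snd p) * h (fst p))"
    unfolding f_def by (auto simp: fun_eq_iff indicator_def)
  moreover have "{p::real\<times>real. fst p \<le> snd p} \<in> sets (borel \<Otimes>\<^sub>M borel)"
    unfolding borel_prod by (intro borel_closed closed_Collect_le continuous_intros)
  ultimately have "case_prod f \<in> borel_measurable (borel \<Otimes>\<^sub>M borel)"
    using g_meas h_meas by simp
  moreover have "sets (lborel \<Otimes>\<^sub>M lborel) = sets (borel \<Otimes>\<^sub>M borel)"
    by (intro sets_pair_measure_cong) auto
  ultimately have f_meas: "case_prod f \<in> borel_measurable (lborel \<Otimes>\<^sub>M lborel)"
    using measurable_cong_sets by blast
  let ?Q = "{-\<bar>R\<bar>..\<bar>R\<bar>} \<times> {-\<bar>n\<bar>..\<bar>n\<bar>}"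
  have "integrable (lborel \<Otimes>\<^sub>M lborel) (case_prod f)"
  proof (rule Bochner_Integration.integrable_bound)
    have "emeasure (lborel \<Otimes>\<^sub>M lborel) ?Q = emeasure lborel {-\<bar>R\<bar>..\<bar>R\<bar>} * emeasure lborel {-\<bar>n\<bar>..\<bar>n\<bar>}"
      by (rule lborel.emeasure_pair_measure_Times) auto
    then show "integrable (lborel \<Otimes>\<^sub>M lborel) (\<lambda>p. indicator ?Q p *\<^sub>R (B * C))"
      by (intro integrable_indicator) (auto simp: emeasure_lborel_Icc_eq ennreal_mult_less_top)
    show "AE p in lborel \<Otimes>\<^sub>M lborel. norm (case_prod f p) \<le> norm (indicator ?Q p *\<^sub>R (B * C))"
    proof (rule AE_I2, clarify)
      fix t x
      have "\<bar>f t x\<bar> \<le> B * C" unfolding f_def abs_mult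
        using g_bound[of x] h_bound[of t] B0 C0 by (auto simp: indicator_def intro: mult_mono)
      moreover have "f t x = 0" if "(t, x) \<notin> ?Q"
      proof -
        have "\<not> \<bar>t\<bar> \<le> \<bar>R\<bar> \<or> \<not> \<bar>x\<bar> \<le> \<bar>n\<bar>" using that by (auto simp: abs_le_iff)
        then have "\<bar>t\<bar> > R \<or> \<bar>x\<bar> > n" using abs_ge_self[of R] abs_ge_self[of n] by linarith
        then show ?thesis using h_support[of t] g_support[of x] unfolding f_def by auto
      qed
      ultimately show "norm (f t x) \<le> norm (indicator ?Q (t, x) *\<^sub>R (B * C))"
        using B0 C0 by (cases "(t, x) \<in> ?Q") auto
    qed
  qed (rule f_meas)
  then have "(\<integral>x. (\<integral>t. f t x \<partial>lborel) \<partial>lborel) = (\<integral>t. (\<integral>x. f t x \<partial>lborel) \<partial>lborel)"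
    by (rule lborel_pair.Fubini_integral)
  moreover have "(\<lambda>t. f t x) = (\<lambda>t. g x * (indicator {..x} t * h t))" for x
    unfolding f_def by (auto simp: fun_eq_iff indicator_def)
  moreover have "(\<lambda>x. f t x) = (\<lambda>x. h t * (indicator {t..} x * g x))" for t
    unfolding f_def by (auto simp: fun_eq_iff)
  ultimately show ?thesis by simp
qed

lemma primitive_at_top_by_parts:
  assumes tf: "test_fun \<eta> Dk"
  shows "integrable lborel (\<lambda>t. primitive_at_top g t * Dk 1 t)"
    and "integrable lborel (\<lambda>t. g t * \<eta> t)"
    and "(\<integral>t. primitive_at_top g t * Dk 1 t \<partial>lborel) = - (\<integral>t. g t * \<eta> t \<partial>lborel)"
proof -
  obtain R where R: "R \<ge> 0" "\<And>k t. \<bar>t\<bar> > R \<Longrightarrow> Dk k t = 0"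
    using test_fun_support[OF tf] by blast
  obtain C where C: "\<And>t. \<bar>Dk 1 t\<bar> \<le> C" using test_fun_bounded[OF tf] by blast
  obtain E where E: "\<And>t. \<bar>Dk 0 t\<bar> \<le> E" using test_fun_bounded[OF tf] by blast
  have D0: "Dk 0 = \<eta>" using tf unfolding test_fun_def by blast
  have Dk_meas: "Dk k \<in> borel_measurable lborel" for k
    using borel_measurable_continuous_onI[OF test_fun_continuous[OF tf]] by simp
  have P_meas: "primitive_at_top g \<in> borel_measurable lborel"
    using borel_measurable_continuous_onI[OF continuous_primitive_at_top] by simp
  have B0: "0 \<le> B" using g_bound[of 0] by simp
  show "integrable lborel (\<lambda>t. primitive_at_top g t * Dk 1 t)"
  proof (rule integrable_bounded_compact_support)
    show "\<bar>primitive_at_top g t * Dk 1 t\<bar> \<le> B * (2 * \<bar>n\<bar> + 1) * C" for t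
      unfolding abs_mult using B0 by (intro mult_mono primitive_at_top_bound C) auto
  qed (use P_meas Dk_meas R in auto)
  show "integrable lborel (\<lambda>t. g t * \<eta> t)"
  proof (rule integrable_bounded_compact_support)
    show "\<bar>g t * \<eta> t\<bar> \<le> B * E" for t
      unfolding abs_mult D0[symmetric] using B0 by (intro mult_mono g_bound E) auto
  qed (use g_meas Dk_meas[of 0] D0 g_support in auto)
  have "(\<integral>t. g t * \<eta> t \<partial>lborel) = (\<integral>x. g x * (\<integral>t. indicator {..x} t * Dk 1 t \<partial>lborel) \<partial>lborel)"
    by (simp only: test_fun_integral_atMost[OF tf])
  also have "\<dots> = (\<integral>t. Dk 1 t * (\<integral>x. indicator {t..} x * g x \<partial>lborel) \<partial>lborel)"
    by (rule integral_swap_halfplane[OF Dk_meas C R(2)])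
  also have "\<dots> = - (\<integral>t. primitive_at_top g t * Dk 1 t \<partial>lborel)"
    by (simp add: primitive_at_top_def mult.commute)
  finally show "(\<integral>t. primitive_at_top g t * Dk 1 t \<partial>lborel) = - (\<integral>t. g t * \<eta> t \<partial>lborel)"
    by simp
qed

end

section \<open>The weighted spaces\<close>

lemma wnorm_nonneg: "wnorm r f \<ge> 0"
  unfolding wnorm_def by simp

lemma wnorm_scaleR: "wnorm r (\<lambda>t. c *\<^sub>R f t) = \<bar>c\<bar> * wnorm r f"
proof -
  have "(\<lambda>t. (norm (c *\<^sub>R f t))\<^sup>2 * exp (-2 * r * t)) = (\<lambda>t. c\<^sup>2 * ((norm (f t))\<^sup>2 * exp (-2 * r * t)))"
    by (simp add: power_mult_distrib fun_eq_iff)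
  then show ?thesis unfolding wnorm_def by (simp add: real_sqrt_mult)
qed

lemma wnorm_squared:
  "(wnorm r f)\<^sup>2 = (\<integral>t. (norm (f t))\<^sup>2 * exp (-2 * r * t) \<partial>lborel)"
  unfolding wnorm_def by (simp add: integral_nonneg_AE)

lemma wL2_scaleR:
  assumes "f \<in> wL2 r"
  shows "(\<lambda>t. c *\<^sub>R f t) \<in> wL2 r"
proof -
  from assms have f_meas: "f \<in> borel_measurable lborel"
    and "\<exists>D. countable D \<and> (AE t in lborel. f t \<in> closure D)"
    and f_int: "integrable lborel (\<lambda>t. (norm (f t))\<^sup>2 * exp (-2 * r * t))"
    unfolding wL2_def by auto
  then obtain D where D: "countable D" "AE t in lborel. f t \<in> closure D" by blast
  have cont: "continuous_on UNIV (\<lambda>x::'a. c *\<^sub>R x)" by (intro continuous_intros)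
  have "AE t in lborel. c *\<^sub>R f t \<in> closure ((\<lambda>x. c *\<^sub>R x) ` D)"
    using D(2) by eventually_elim (rule continuous_in_closure_image[OF cont])
  moreover have "integrable lborel (\<lambda>t. (norm (c *\<^sub>R f t))\<^sup>2 * exp (-2 * r * t))"
  proof -
    have "integrable lborel (\<lambda>t. c\<^sup>2 * ((norm (f t))\<^sup>2 * exp (-2 * r * t)))"
      using f_int by simp
    then show ?thesis by (simp add: power_mult_distrib mult.assoc)
  qed
  moreover have "countable ((\<lambda>x. c *\<^sub>R x) ` D)" using D(1) by simp
  ultimately show ?thesis
    using borel_measurable_continuous_on[OF cont f_meas] unfolding wL2_def by blast
qed

lemma wH1_scaleR:
  assumes "(\<psi>, \<psi>') \<in> wH1 r"
  shows "((\<lambda>t. c *\<^sub>R \<psi> t), (\<lambda>t. c *\<^sub>R \<psi>' t)) \<in> wH1 r"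
  using assms unfolding wH1_def weak_deriv_def by (auto intro: wL2_scaleR simp: mult.assoc)

lemma zero_in_wH1: "((\<lambda>t. 0 :: 'h::real_inner), (\<lambda>t. 0)) \<in> wH1 r"
proof -
  have "(\<lambda>t. 0 :: 'h) \<in> wL2 r"
    unfolding wL2_def by (auto intro!: exI[of _ "{0}"])
  then show ?thesis unfolding wH1_def weak_deriv_def by auto
qed

lemma wHm1_diff:
  assumes A: "A \<in> wHm1 \<rho>" and B: "B \<in> wHm1 \<rho>"
  shows "(\<lambda>\<psi>. A \<psi> - B \<psi>) \<in> wHm1 \<rho>"
proof -
  from A obtain CA where CA: "\<forall>(\<psi>, \<psi>') \<in> wH1 (-\<rho>). \<bar>A \<psi>\<bar> \<le> CA * wnorm (-\<rho>) \<psi>'"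
    unfolding wHm1_def by blast
  from B obtain CB where CB: "\<forall>(\<psi>, \<psi>') \<in> wH1 (-\<rho>). \<bar>B \<psi>\<bar> \<le> CB * wnorm (-\<rho>) \<psi>'"
    unfolding wHm1_def by blast
  have bound: "\<bar>A \<psi> - B \<psi>\<bar> \<le> (CA + CB) * wnorm (-\<rho>) \<psi>'" if "(\<psi>, \<psi>') \<in> wH1 (-\<rho>)" for \<psi> \<psi>'
  proof -
    have "\<bar>A \<psi>\<bar> \<le> CA * wnorm (-\<rho>) \<psi>'" "\<bar>B \<psi>\<bar> \<le> CB * wnorm (-\<rho>) \<psi>'"
      using CA CB that by fast+
    then show ?thesis by (simp add: distrib_right)
  qed
  have linear: "A (\<lambda>t. a *\<^sub>R \<psi>1 t + b *\<^sub>R \<psi>2 t) - B (\<lambda>t. a *\<^sub>R \<psi>1 t + b *\<^sub>R \<psi>2 t)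
      = a * (A \<psi>1 - B \<psi>1) + b * (A \<psi>2 - B \<psi>2)"
    if "(\<psi>1, \<psi>1') \<in> wH1 (-\<rho>)" "(\<psi>2, \<psi>2') \<in> wH1 (-\<rho>)" for \<psi>1 \<psi>1' \<psi>2 \<psi>2' a b
  proof -
    have "A (\<lambda>t. a *\<^sub>R \<psi>1 t + b *\<^sub>R \<psi>2 t) = a * A \<psi>1 + b * A \<psi>2"
      "B (\<lambda>t. a *\<^sub>R \<psi>1 t + b *\<^sub>R \<psi>2 t) = a * B \<psi>1 + b * B \<psi>2"
      using A B that unfolding wHm1_def by fast+
    then show ?thesis by (simp add: algebra_simps)
  qed
  show ?thesis
    unfolding wHm1_def using linear bound by blast
qed

lemma wHm1_scaleR:
  assumes "\<phi> \<in> wHm1 \<rho>" and "(\<psi>, \<psi>') \<in> wH1 (-\<rho>)"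
  shows "\<phi> (\<lambda>t. c *\<^sub>R \<psi> t) = c * \<phi> \<psi>"
proof -
  have "\<phi> (\<lambda>t. c *\<^sub>R \<psi> t + 0 *\<^sub>R \<psi> t) = c * \<phi> \<psi> + 0 * \<phi> \<psi>"
    using assms unfolding wHm1_def by fast
  then show ?thesis by simp
qed

lemma dnorm_bdd_above:
  assumes "\<phi> \<in> wHm1 \<rho>"
  shows "bdd_above {\<bar>\<phi> \<psi>\<bar> | \<psi> \<psi>'. (\<psi>, \<psi>') \<in> wH1 (-\<rho>) \<and> wnorm (-\<rho>) \<psi>' \<le> 1}"
proof -
  from assms obtain C where C: "\<forall>(\<psi>, \<psi>') \<in> wH1 (-\<rho>). \<bar>\<phi> \<psi>\<bar> \<le> C * wnorm (-\<rho>) \<psi>'"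
    unfolding wHm1_def by blast
  have "\<bar>\<phi> \<psi>\<bar> \<le> \<bar>C\<bar>" if "(\<psi>, \<psi>') \<in> wH1 (-\<rho>)" "wnorm (-\<rho>) \<psi>' \<le> 1" for \<psi> \<psi>'
  proof -
    have "\<bar>\<phi> \<psi>\<bar> \<le> C * wnorm (-\<rho>) \<psi>'" using C that(1) by fast
    also have "\<dots> \<le> \<bar>C\<bar> * 1" using that(2) wnorm_nonneg
      by (intro mult_mono) (auto simp: abs_ge_self)
    finally show ?thesis by simp
  qed
  then show ?thesis by (intro bdd_aboveI) blast
qed

lemma dnorm_upper:
  assumes "\<phi> \<in> wHm1 \<rho>" "(\<psi>, \<psi>') \<in> wH1 (-\<rho>)" "wnorm (-\<rho>) \<psi>' \<le> 1"
  shows "\<bar>\<phi> \<psi>\<bar> \<le> dnorm \<rho> \<phi>"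
  unfolding dnorm_def using assms by (intro cSup_upper dnorm_bdd_above) blast+

lemma dnorm_nonneg: "\<phi> \<in> wHm1 \<rho> \<Longrightarrow> dnorm \<rho> \<phi> \<ge> 0"
  using dnorm_upper[OF _ zero_in_wH1] by (fastforce simp: wnorm_def)

lemma dnorm_bound:
  assumes \<phi>: "\<phi> \<in> wHm1 \<rho>" and \<psi>: "(\<psi>, \<psi>') \<in> wH1 (-\<rho>)"
  shows "\<bar>\<phi> \<psi>\<bar> \<le> dnorm \<rho> \<phi> * wnorm (-\<rho>) \<psi>'"
proof (cases "wnorm (-\<rho>) \<psi>' = 0")
  case True
  from \<phi> obtain C where "\<forall>(\<psi>, \<psi>') \<in> wH1 (-\<rho>). \<bar>\<phi> \<psi>\<bar> \<le> C * wnorm (-\<rho>) \<psi>'"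
    unfolding wHm1_def by blast
  with \<psi> True show ?thesis by fastforce
next
  case False
  define M where "M = wnorm (-\<rho>) \<psi>'"
  have M: "M > 0" using False wnorm_nonneg[of "-\<rho>" \<psi>'] unfolding M_def by linarith
  have "\<bar>\<phi> (\<lambda>t. (1/M) *\<^sub>R \<psi> t)\<bar> \<le> dnorm \<rho> \<phi>"
    using M by (intro dnorm_upper[OF \<phi> wH1_scaleR[OF \<psi>]]) (simp add: wnorm_scaleR M_def)
  then show ?thesis
    using M unfolding wHm1_scaleR[OF \<phi> \<psi>] M_def[symmetric] by (simp add: abs_mult field_simps)
qed

lemma
  fixes F :: "(real \<Rightarrow> 'h::real_inner) \<Rightarrow> (real \<Rightarrow> 'h) \<Rightarrow> real"
  assumes "\<exists>L. lip_bound \<rho> F L"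
  shows lip_const_nonneg: "lip_const \<rho> F \<ge> 0"
    and lip_bound_lip_const: "lip_bound \<rho> F (lip_const \<rho> F)"
proof -
  define S where "S = {L. L \<ge> 0 \<and> lip_bound \<rho> F L}"
  have mono: "lip_bound \<rho> F L'" if "lip_bound \<rho> F L" "L \<le> L'" for L L'
    using that unfolding lip_bound_def by (meson mult_right_mono order_trans wnorm_nonneg)
  from assms obtain L0 where "lip_bound \<rho> F L0" by blast
  then have L0: "max L0 0 \<in> S" unfolding S_def using mono by simp
  show "lip_const \<rho> F \<ge> 0"
    unfolding lip_const_def S_def[symmetric] using L0 by (auto intro!: cInf_greatest simp: S_def)
  show "lip_bound \<rho> F (lip_const \<rho> F)"
    unfolding lip_bound_def
  proof (intro ballI)
    fix x y :: "real \<Rightarrow> 'h" assume xy: "x \<in> wL2 \<rho>" "y \<in> wL2 \<rho>"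
    define W where "W = wnorm \<rho> (\<lambda>t. x t - y t)"
    define d where "d = dnorm \<rho> (\<lambda>\<psi>. F x \<psi> - F y \<psi>)"
    have dL: "d \<le> L * W" if "L \<in> S" for L
      using that xy unfolding S_def lip_bound_def d_def W_def by blast
    show "dnorm \<rho> (\<lambda>\<psi>. F x \<psi> - F y \<psi>) \<le> lip_const \<rho> F * wnorm \<rho> (\<lambda>t. x t - y t)"
      unfolding d_def[symmetric] W_def[symmetric]
    proof (cases "W = 0")
      case True
      then show "d \<le> lip_const \<rho> F * W" using dL L0 by force
    next
      case False
      then have W: "W > 0" using wnorm_nonneg unfolding W_def by (metis less_eq_real_def)
      have "d / W \<le> Inf S"
        using L0 dL W by (intro cInf_greatest) (auto simp: divide_le_eq)
      then show "d \<le> lip_const \<rho> F * W"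
        unfolding lip_const_def S_def[symmetric] using W by (simp add: divide_le_eq)
    qed
  qed
qed

section \<open>Weighted simple functions and their approximation\<close>

lemma scaleR_simple_function_in_wL2:
  fixes s :: "real \<Rightarrow> 'h::real_inner" and a :: "real \<Rightarrow> real"
  assumes s: "simple_function lborel s" and n: "\<And>t. \<bar>t\<bar> > n \<Longrightarrow> s t = 0"
    and a: "continuous_on UNIV a"
  shows "(\<lambda>t. a t *\<^sub>R s t) \<in> wL2 r"
proof -
  have fin: "finite (range s)" using simple_functionD(1)[OF s] by simp
  have "(\<lambda>t. (\<lambda>x v. a x *\<^sub>R v) t (s t)) \<in> borel_measurable lborel"
    by (rule borel_measurable_comb_simple_function[OF _ s]) (auto intro: continuous_intros a)
  then have meas: "(\<lambda>t. a t *\<^sub>R s t) \<in> borel_measurable lborel" by simp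
  let ?D = "\<Union>v\<in>range s. (\<lambda>q. q *\<^sub>R v) ` \<rat>"
  have "a t *\<^sub>R s t \<in> closure ?D" for t
  proof -
    have "a t *\<^sub>R s t \<in> closure ((\<lambda>q. q *\<^sub>R s t) ` \<rat>)"
      by (rule continuous_in_closure_image) (auto intro: continuous_intros simp: Rats_closure_real)
    also have "\<dots> \<subseteq> closure ?D" by (intro closure_mono) auto
    finally show ?thesis .
  qed
  moreover have "countable ?D"
    using fin countable_rat by (intro countable_UN) (auto intro: countable_finite)
  ultimately have separable: "\<exists>D. countable D \<and> (AE t in lborel. a t *\<^sub>R s t \<in> closure D)"
    by blast
  let ?w = "\<lambda>t. (a t)\<^sup>2 * exp (-2 * r * t)"
  have "continuous_on {-\<bar>n\<bar>..\<bar>n\<bar>} ?w"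
    using a by (intro continuous_intros) (auto intro: continuous_on_subset)
  then have "compact (?w ` {-\<bar>n\<bar>..\<bar>n\<bar>})"
    by (rule compact_continuous_image[OF _ compact_Icc])
  then have "bounded (?w ` {-\<bar>n\<bar>..\<bar>n\<bar>})"
    by (rule compact_imp_bounded)
  then obtain K where "\<forall>x \<in> ?w ` {-\<bar>n\<bar>..\<bar>n\<bar>}. norm x \<le> K"
    unfolding bounded_iff by blast
  then have K: "\<bar>?w t\<bar> \<le> K" if "t \<in> {-\<bar>n\<bar>..\<bar>n\<bar>}" for t
    using that by (simp only: ball_simps real_norm_def)
  have K0: "0 \<le> K" using order_trans[OF abs_ge_zero K[of 0]] by simp
  define S where "S = (\<Sum>v\<in>range s. norm v)"
  have S: "norm (s t) \<le> S" for t
    unfolding S_def using fin by (intro member_le_sum) auto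
  have "integrable lborel (\<lambda>t. (norm (a t *\<^sub>R s t))\<^sup>2 * exp (-2 * r * t))"
  proof (rule integrable_bounded_compact_support[where n = n])
    show "\<bar>(norm (a t *\<^sub>R s t))\<^sup>2 * exp (-2 * r * t)\<bar> \<le> K * S\<^sup>2" for t
    proof (cases "\<bar>t\<bar> > n")
      case True
      then show ?thesis using n[OF True] K0 by simp
    next
      case False
      then have "\<bar>?w t\<bar> \<le> K" by (intro K) auto
      moreover have "(norm (s t))\<^sup>2 \<le> S\<^sup>2" using S[of t] by (intro power_mono) auto
      ultimately have "\<bar>?w t\<bar> * (norm (s t))\<^sup>2 \<le> K * S\<^sup>2"
        using K0 by (intro mult_mono) auto
      then show ?thesis by (simp add: power_mult_distrib abs_mult mult_ac)
    qed
    have "(\<lambda>t. (\<lambda>x v. (norm (a x *\<^sub>R v))\<^sup>2 * exp (-2 * r * x)) t (s t)) \<in> borel_measurable lborel"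
      by (rule borel_measurable_comb_simple_function[OF _ s]) (auto intro!: continuous_intros a)
    then show "(\<lambda>t. (norm (a t *\<^sub>R s t))\<^sup>2 * exp (-2 * r * t)) \<in> borel_measurable lborel"
      by simp
  qed (use n in simp)
  with meas separable show ?thesis unfolding wL2_def by blast
qed

lemma continuous_in_wL2_neg:
  fixes \<psi> :: "real \<Rightarrow> 'h::real_inner"
  assumes \<rho>: "\<rho> > 0" and cont: "continuous_on UNIV \<psi>"
    and K: "\<And>t. norm (\<psi> t) \<le> K" and a: "\<And>t. t > a \<Longrightarrow> \<psi> t = 0"
  shows "\<psi> \<in> wL2 (-\<rho>)"
proof -
  have meas: "\<psi> \<in> borel_measurable lborel"
    using borel_measurable_continuous_onI[OF cont] by simp
  have "\<psi> t \<in> closure (\<psi> ` \<rat>)" for t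
    using continuous_in_closure_image[OF cont] by (simp add: Rats_closure_real)
  then have separable: "\<exists>D. countable D \<and> (AE t in lborel. \<psi> t \<in> closure D)"
    using countable_rat by (intro exI[of _ "\<psi> ` \<rat>"]) auto
  have "integrable lborel (\<lambda>t. (norm (\<psi> t))\<^sup>2 * exp (-2 * (-\<rho>) * t))"
  proof (rule Bochner_Integration.integrable_bound)
    show "integrable lborel (\<lambda>t. K\<^sup>2 * (indicator {..a} t * exp ((2 * \<rho>) * t)))"
      using integrable_indicator_atMost_exp[of "2 * \<rho>" a] \<rho> by simp
    show "AE t in lborel. norm ((norm (\<psi> t))\<^sup>2 * exp (-2 * (-\<rho>) * t))
                        \<le> norm (K\<^sup>2 * (indicator {..a} t * exp ((2 * \<rho>) * t)))"
    proof (rule AE_I2)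
      fix t
      show "norm ((norm (\<psi> t))\<^sup>2 * exp (-2 * (-\<rho>) * t))
          \<le> norm (K\<^sup>2 * (indicator {..a} t * exp ((2 * \<rho>) * t)))"
      proof (cases "t \<le> a")
        case True
        have "(norm (\<psi> t))\<^sup>2 \<le> K\<^sup>2" using K[of t] by (intro power_mono) auto
        then show ?thesis using True by (simp add: mult_right_mono)
      qed (simp add: a)
    qed
    show "(\<lambda>t. (norm (\<psi> t))\<^sup>2 * exp (-2 * (-\<rho>) * t)) \<in> borel_measurable lborel"
      using meas by measurable
  qed
  with meas separable show ?thesis unfolding wL2_def by blast
qed

lemma weak_deriv_sum_primitive_at_top:
  fixes g :: "'h::real_inner \<Rightarrow> real \<Rightarrow> real"
  assumes V: "finite V"
    and g_meas: "\<And>v. v \<in> V \<Longrightarrow> g v \<in> borel_measurable lborel"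
    and g_bound: "\<And>v t. v \<in> V \<Longrightarrow> \<bar>g v t\<bar> \<le> B"
    and g_support: "\<And>v t. v \<in> V \<Longrightarrow> \<bar>t\<bar> > n \<Longrightarrow> g v t = 0"
  shows "weak_deriv (\<lambda>t. \<Sum>v\<in>V. primitive_at_top (g v) t *\<^sub>R v) (\<lambda>t. \<Sum>v\<in>V. g v t *\<^sub>R v)"
  unfolding weak_deriv_def
proof (intro allI impI)
  fix \<eta> Dk and h :: 'h
  assume tf: "test_fun \<eta> Dk"
  have by_parts: "integrable lborel (\<lambda>t. primitive_at_top (g v) t * Dk 1 t)"
      "integrable lborel (\<lambda>t. g v t * \<eta> t)"
      "(\<integral>t. primitive_at_top (g v) t * Dk 1 t \<partial>lborel) = - (\<integral>t. g v t * \<eta> t \<partial>lborel)"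
    if "v \<in> V" for v
    using primitive_at_top_by_parts[OF g_meas[OF that] g_bound[OF that] g_support[OF that] tf]
    by auto
  have "(\<integral>t. inner (\<Sum>v\<in>V. primitive_at_top (g v) t *\<^sub>R v) h * Dk 1 t \<partial>lborel)
      = (\<integral>t. (\<Sum>v\<in>V. (primitive_at_top (g v) t * Dk 1 t) * inner v h) \<partial>lborel)"
    by (simp add: inner_sum_left sum_distrib_left sum_distrib_right algebra_simps)
  also have "\<dots> = (\<Sum>v\<in>V. (\<integral>t. primitive_at_top (g v) t * Dk 1 t \<partial>lborel) * inner v h)"
    using by_parts(1) by (subst Bochner_Integration.integral_sum) auto
  also have "\<dots> = - (\<Sum>v\<in>V. (\<integral>t. g v t * \<eta> t \<partial>lborel) * inner v h)"
    using by_parts(3) by (simp add: sum_negf)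
  also have "(\<Sum>v\<in>V. (\<integral>t. g v t * \<eta> t \<partial>lborel) * inner v h)
      = (\<integral>t. (\<Sum>v\<in>V. (g v t * \<eta> t) * inner v h) \<partial>lborel)"
    using by_parts(2) by (subst Bochner_Integration.integral_sum) auto
  also have "\<dots> = (\<integral>t. inner (\<Sum>v\<in>V. g v t *\<^sub>R v) h * \<eta> t \<partial>lborel)"
    by (simp add: inner_sum_left sum_distrib_left sum_distrib_right algebra_simps)
  finally show "(\<integral>t. inner (\<Sum>v\<in>V. primitive_at_top (g v) t *\<^sub>R v) h * Dk 1 t \<partial>lborel)
      = - (\<integral>t. inner (\<Sum>v\<in>V. g v t *\<^sub>R v) h * \<eta> t \<partial>lborel)" .
qed

lemma weighted_simple_function_is_derivative:
  fixes s :: "real \<Rightarrow> 'h::real_inner" and \<rho> n :: real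
  assumes \<rho>: "\<rho> > 0" and s: "simple_function lborel s" and n: "\<And>t. \<bar>t\<bar> > n \<Longrightarrow> s t = 0"
  shows "\<exists>\<psi>. (\<psi>, (\<lambda>t. exp (-2 * \<rho> * t) *\<^sub>R s t)) \<in> wH1 (-\<rho>)"
proof -
  define V where "V = range s - {0}"
  have V: "finite V" unfolding V_def using simple_functionD(1)[OF s] by simp
  define g where "g v t = exp (-2 * \<rho> * t) * indicator (s -` {v}) t" for v t
  define B where "B = exp (2 * \<rho> * \<bar>n\<bar>)"
  have g_meas: "g v \<in> borel_measurable lborel" for v
  proof -
    have "s -` {v} \<in> sets lborel"
      using simple_functionD(2)[OF s, of "{v}"] by (cases "v \<in> range s") auto
    then show ?thesis unfolding g_def by (intro borel_measurable_times) auto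
  qed
  have g_support: "g v t = 0" if "v \<in> V" "\<bar>t\<bar> > n" for v t
    using that n[of t] unfolding g_def V_def by (auto simp: indicator_def)
  have g_bound: "\<bar>g v t\<bar> \<le> B" if "v \<in> V" for v t
  proof (cases "\<bar>t\<bar> > n")
    case False
    then have "-t \<le> \<bar>n\<bar>" using abs_ge_minus_self[of t] abs_ge_self[of n] by linarith
    then have "\<rho> * (-t) \<le> \<rho> * \<bar>n\<bar>" using \<rho> by (intro mult_left_mono) auto
    then have "-2 * \<rho> * t \<le> 2 * \<rho> * \<bar>n\<bar>" by simp
    then show ?thesis unfolding g_def B_def by (auto simp: indicator_def)
  qed (simp add: g_support that B_def)
  define \<psi> where "\<psi> t = (\<Sum>v\<in>V. primitive_at_top (g v) t *\<^sub>R v)" for t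
  have deriv_eq: "exp (-2 * \<rho> * t) *\<^sub>R s t = (\<Sum>v\<in>V. g v t *\<^sub>R v)" for t
  proof -
    have "(\<Sum>v\<in>V. g v t *\<^sub>R v) = (\<Sum>v\<in>V. if s t = v then exp (-2 * \<rho> * t) *\<^sub>R v else 0)"
      unfolding g_def by (intro sum.cong) (auto simp: indicator_def)
    also have "\<dots> = exp (-2 * \<rho> * t) *\<^sub>R s t"
      using V by (simp add: sum.delta V_def)
    finally show ?thesis by simp
  qed
  have primitive: "\<bar>primitive_at_top (g v) t\<bar> \<le> B * (2 * \<bar>n\<bar> + 1)"
      "continuous_on UNIV (primitive_at_top (g v))"
      "t > \<bar>n\<bar> \<Longrightarrow> primitive_at_top (g v) t = 0"
    if "v \<in> V" for v t
    using primitive_at_top_bound[OF g_meas g_bound[OF that] g_support[OF that]]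
      continuous_primitive_at_top[OF g_meas g_bound[OF that] g_support[OF that]]
      primitive_at_top_eq_0[OF g_meas g_bound[OF that] g_support[OF that]]
    by auto
  have "\<psi> \<in> wL2 (-\<rho>)"
  proof (rule continuous_in_wL2_neg[OF \<rho>])
    show "continuous_on UNIV \<psi>"
      unfolding \<psi>_def using primitive(2) by (intro continuous_intros) auto
    show "norm (\<psi> t) \<le> (\<Sum>v\<in>V. B * (2 * \<bar>n\<bar> + 1) * norm v)" for t
      unfolding \<psi>_def using primitive(1)
      by (intro order_trans[OF norm_sum] sum_mono) (simp add: mult_right_mono)
    show "\<psi> t = 0" if "t > \<bar>n\<bar>" for t
      unfolding \<psi>_def using primitive(3) that by simp
  qed
  moreover have "continuous_on UNIV (\<lambda>t. exp (-2 * \<rho> * t))" by (intro continuous_intros)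
  with s n have "(\<lambda>t. exp (-2 * \<rho> * t) *\<^sub>R s t) \<in> wL2 (-\<rho>)"
    by (rule scaleR_simple_function_in_wL2)
  moreover have "weak_deriv \<psi> (\<lambda>t. exp (-2 * \<rho> * t) *\<^sub>R s t)"
    unfolding \<psi>_def deriv_eq by (rule weak_deriv_sum_primitive_at_top[OF V g_meas g_bound g_support])
  ultimately show ?thesis unfolding wH1_def by blast
qed

text \<open>With \<open>d\<close> enumerating \<open>D \<union> {0}\<close>, the \<open>m\<close>-th approximant takes, at each \<open>t\<close> with
  \<open>\<bar>t\<bar> \<le> m\<close>, the first of \<open>d 0, \<dots>, d m\<close> that is within relative distance \<open>\<delta>\<close> of \<open>f t\<close>.\<close>
lemma separably_valued_simple_approximation:
  fixes f :: "real \<Rightarrow> 'h::real_normed_vector"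
  assumes f_meas: "f \<in> borel_measurable lborel" and D: "countable D"
    and f_D: "AE t in lborel. f t \<in> closure D" and \<delta>: "\<delta> > 0"
  obtains s :: "nat \<Rightarrow> real \<Rightarrow> 'h" and A :: "nat \<Rightarrow> real set"
  where "\<And>m. simple_function lborel (s m)" "\<And>m t. \<bar>t\<bar> > real m \<Longrightarrow> s m t = 0"
    and "\<And>m. A m \<in> sets lborel"
    and "\<And>m t. t \<in> A m \<Longrightarrow> norm (f t - s m t) < \<delta> * norm (f t)"
    and "\<And>m t. t \<notin> A m \<Longrightarrow> s m t = 0"
    and "AE t in lborel. f t \<noteq> 0 \<longrightarrow> eventually (\<lambda>m. t \<in> A m) sequentially"
proof -
  define d where "d = from_nat_into (insert 0 D)"
  have range_d: "range d = insert 0 D" unfolding d_def using D by simp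
  define P where "P k t \<longleftrightarrow> norm (f t - d k) < \<delta> * norm (f t)" for k t
  define A where "A m = {t. \<bar>t\<bar> \<le> real m \<and> (\<exists>k\<le>m. P k t)}" for m :: nat
  define s where "s m t = (if t \<in> A m then d (LEAST k. P k t) else 0)" for m t
  have [measurable]: "Measurable.pred lborel (P k)" for k
  proof -
    have "(\<lambda>t. norm (f t - d k) - \<delta> * norm (f t)) \<in> borel_measurable lborel"
      by (rule borel_measurable_continuous_on[OF _ f_meas]) (intro continuous_intros)
    then have "Measurable.pred lborel (\<lambda>t. norm (f t - d k) - \<delta> * norm (f t) < 0)"
      by measurable
    then show ?thesis unfolding P_def by simp
  qed
  have A_meas: "A m \<in> sets lborel" for m
  proof -
    have "Measurable.pred lborel (\<lambda>t. \<bar>t\<bar> \<le> real m \<and> (\<exists>k\<le>m. P k t))" by measurable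
    then show ?thesis unfolding A_def by (simp add: pred_def)
  qed
  have least: "(LEAST k. P k t) \<le> m \<and> P (LEAST k. P k t) t" if "t \<in> A m" for t m
  proof -
    from that obtain k where "k \<le> m" "P k t" unfolding A_def by auto
    then show ?thesis using Least_le[of "\<lambda>k. P k t"] LeastI[of "\<lambda>k. P k t"] by fastforce
  qed
  have simple: "simple_function lborel (s m)" for m
    unfolding simple_function_def
  proof
    have "s m ` UNIV \<subseteq> insert 0 (d ` {..m})" unfolding s_def using least by auto
    then show "finite (s m ` space lborel)" by (auto intro: finite_subset)
    have "(\<lambda>t. LEAST k. P k t) \<in> measurable lborel (count_space UNIV)"
      by (intro measurable_Least) measurable
    then have "(\<lambda>t. d (LEAST k. P k t)) \<in> measurable lborel (count_space UNIV)"
      by (rule measurable_compose) simp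
    then have s_meas: "s m \<in> measurable lborel (count_space UNIV)"
      unfolding s_def using A_meas[of m] by (intro measurable_If_set) auto
    show "\<forall>x\<in>s m ` space lborel. s m -` {x} \<inter> space lborel \<in> sets lborel"
      using measurable_sets[OF s_meas, of "{_}"] by simp
  qed
  have support: "s m t = 0" if "\<bar>t\<bar> > real m" for m t
    using that unfolding s_def A_def by auto
  have close: "norm (f t - s m t) < \<delta> * norm (f t)" if "t \<in> A m" for m t
    using least[OF that] that unfolding s_def P_def by simp
  have zero_outside: "s m t = 0" if "t \<notin> A m" for m t
    using that unfolding s_def by simp
  have eventually_in: "AE t in lborel. f t \<noteq> 0 \<longrightarrow> eventually (\<lambda>m. t \<in> A m) sequentially"
    using f_D
  proof eventually_elim
    case (elim t)
    show ?case
    proof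
      assume "f t \<noteq> 0"
      moreover have "f t \<in> closure (insert 0 D)" using elim closure_mono[of D] by blast
      ultimately obtain y where "y \<in> insert 0 D" "dist y (f t) < \<delta> * norm (f t)"
        using closure_approachable \<delta> by (metis mult_pos_pos zero_less_norm_iff)
      then obtain k where "P k t" using range_d unfolding P_def
        by (metis dist_norm norm_minus_commute rangeE)
      show "eventually (\<lambda>m. t \<in> A m) sequentially"
      proof (rule eventually_sequentiallyI[of "max k (nat \<lceil>\<bar>t\<bar>\<rceil>)"])
        fix m assume "max k (nat \<lceil>\<bar>t\<bar>\<rceil>) \<le> m"
        then show "t \<in> A m" using \<open>P k t\<close> unfolding A_def by (auto intro!: exI[of _ k])
      qed
    qed
  qed
  show ?thesis by (rule that[OF simple support A_meas close zero_outside eventually_in])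
qed

lemma integral_indicator_Compl_tendsto_0:
  fixes w :: "real \<Rightarrow> real"
  assumes w: "integrable lborel w" and A: "\<And>m. A m \<in> sets lborel"
    and eventually_in: "AE t in lborel. w t \<noteq> 0 \<longrightarrow> eventually (\<lambda>m. t \<in> A m) sequentially"
  shows "(\<lambda>m. \<integral>t. indicator (- A m) t * w t \<partial>lborel) \<longlonglongrightarrow> 0"
proof -
  have lim: "AE t in lborel. (\<lambda>m. indicator (- A m) t * w t) \<longlonglongrightarrow> 0"
    using eventually_in
  proof eventually_elim
    case (elim t)
    show ?case
    proof (cases "w t = 0")
      case False
      with elim have "eventually (\<lambda>m. indicator (- A m) t * w t = 0) sequentially"
        by (auto elim: eventually_mono)
      then show ?thesis by (rule tendsto_eventually)
    qed simp
  qed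
  have bound: "AE t in lborel. norm (indicator (- A m) t * w t) \<le> norm (w t)" for m
    by (intro AE_I2) (auto simp: indicator_def)
  have meas: "(\<lambda>t. indicator (- A m) t * w t) \<in> borel_measurable lborel" for m
    using A[of m] w by (intro borel_measurable_times borel_measurable_indicator) auto
  show ?thesis
    using integral_dominated_convergence[OF borel_measurable_const meas integrable_norm[OF w] lim bound]
    by simp
qed

lemma wL2_simple_approximation:
  fixes f :: "real \<Rightarrow> 'h::real_inner"
  assumes f: "f \<in> wL2 \<rho>" and \<epsilon>: "\<epsilon> > 0"
  obtains s n where "simple_function lborel s" "\<And>t. \<bar>t\<bar> > n \<Longrightarrow> s t = 0"
    "integrable lborel (\<lambda>t. (norm (f t - s t))\<^sup>2 * exp (-2 * \<rho> * t))"
    "(\<integral>t. (norm (f t - s t))\<^sup>2 * exp (-2 * \<rho> * t) \<partial>lborel) \<le> \<epsilon>"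
proof -
  from f have f_meas: "f \<in> borel_measurable lborel"
    and "\<exists>D. countable D \<and> (AE t in lborel. f t \<in> closure D)"
    and f_int: "integrable lborel (\<lambda>t. (norm (f t))\<^sup>2 * exp (-2 * \<rho> * t))"
    unfolding wL2_def by auto
  then obtain D where D: "countable D" "AE t in lborel. f t \<in> closure D" by blast
  define w where "w t = (norm (f t))\<^sup>2 * exp (-2 * \<rho> * t)" for t
  define I where "I = (\<integral>t. w t \<partial>lborel)"
  have I0: "I \<ge> 0" unfolding I_def w_def by simp
  define \<delta> where "\<delta> = min 1 (\<epsilon> / (2 * (I + 1)))"
  have \<delta>0: "\<delta> > 0" and \<delta>1: "\<delta> \<le> 1" unfolding \<delta>_def using \<epsilon> I0 by auto
  have "\<delta>\<^sup>2 * I \<le> \<delta> * (I + 1)"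
    using \<delta>0 \<delta>1 I0 by (intro mult_mono) (auto simp: power2_eq_square mult_le_cancel_left1)
  also have "\<dots> \<le> \<epsilon> / (2 * (I + 1)) * (I + 1)"
    unfolding \<delta>_def using I0 by (intro mult_right_mono) auto
  also have "\<dots> = \<epsilon> / 2" using I0 by (simp add: field_simps)
  finally have \<delta>I: "\<delta>\<^sup>2 * I \<le> \<epsilon> / 2" .
  obtain s A where s: "\<And>m. simple_function lborel (s m)" "\<And>m t. \<bar>t\<bar> > real m \<Longrightarrow> s m t = 0"
    and A: "\<And>m. A m \<in> sets lborel"
    and close: "\<And>m t. t \<in> A m \<Longrightarrow> norm (f t - s m t) < \<delta> * norm (f t)"
    and zero: "\<And>m t. t \<notin> A m \<Longrightarrow> s m t = 0"
    and eventually_in: "AE t in lborel. f t \<noteq> 0 \<longrightarrow> eventually (\<lambda>m. t \<in> A m) sequentially"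
    using separably_valued_simple_approximation[OF f_meas D \<delta>0] by blast
  have "AE t in lborel. w t \<noteq> 0 \<longrightarrow> eventually (\<lambda>m. t \<in> A m) sequentially"
    using eventually_in by eventually_elim (auto simp: w_def)
  with f_int have "(\<lambda>m. \<integral>t. indicator (- A m) t * w t \<partial>lborel) \<longlonglongrightarrow> 0"
    unfolding w_def[abs_def] by (rule integral_indicator_Compl_tendsto_0[OF _ A])
  then have "eventually (\<lambda>m. (\<integral>t. indicator (- A m) t * w t \<partial>lborel) < \<epsilon> / 2) sequentially"
    using \<epsilon> by (intro order_tendstoD) auto
  then obtain m where m: "(\<integral>t. indicator (- A m) t * w t \<partial>lborel) < \<epsilon> / 2"
    unfolding eventually_sequentially by auto
  have err_sq: "(norm (f t - s m t))\<^sup>2 \<le> (if t \<in> A m then \<delta>\<^sup>2 else 1) * (norm (f t))\<^sup>2" for t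
  proof (cases "t \<in> A m")
    case True
    then have "norm (f t - s m t) \<le> \<delta> * norm (f t)" using close[of t m] by simp
    then have "(norm (f t - s m t))\<^sup>2 \<le> (\<delta> * norm (f t))\<^sup>2" by (rule power_mono) simp
    then show ?thesis using True by (simp add: power_mult_distrib)
  qed (simp add: zero)
  have factor_le_1: "(if t \<in> A m then \<delta>\<^sup>2 else 1) \<le> (1::real)" for t
    using \<delta>0 \<delta>1 by (simp add: power_le_one)
  have "(norm (f t - s m t))\<^sup>2 \<le> (norm (f t))\<^sup>2" for t
    using order_trans[OF err_sq[of t] mult_right_mono[OF factor_le_1 zero_le_power2]] by simp
  then have err_le: "(norm (f t - s m t))\<^sup>2 * exp (-2 * \<rho> * t) \<le> w t" for t
    unfolding w_def by (intro mult_right_mono) auto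
  have err: "(norm (f t - s m t))\<^sup>2 * exp (-2 * \<rho> * t) \<le> \<delta>\<^sup>2 * w t + indicator (- A m) t * w t"
    for t
  proof (cases "t \<in> A m")
    case True
    then show ?thesis
      using mult_right_mono[OF err_sq[of t], of "exp (-2 * \<rho> * t)"] unfolding w_def by (simp add: mult_ac)
  next
    case False
    then have "(norm (f t - s m t))\<^sup>2 * exp (-2 * \<rho> * t) = w t" by (simp add: zero w_def)
    moreover have "0 \<le> \<delta>\<^sup>2 * w t" by (simp add: w_def)
    ultimately show ?thesis using False by simp
  qed
  have "(\<lambda>t. (\<lambda>x v. (norm (x - v))\<^sup>2) (f t) (s m t)) \<in> borel_measurable lborel"
    by (rule borel_measurable_comb_simple_function[OF f_meas s(1)]) (intro continuous_intros)
  then have "(\<lambda>t. (norm (f t - s m t))\<^sup>2 * exp (-2 * \<rho> * t)) \<in> borel_measurable lborel"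
    by (intro borel_measurable_times) auto
  then have int: "integrable lborel (\<lambda>t. (norm (f t - s m t))\<^sup>2 * exp (-2 * \<rho> * t))"
    using f_int err_le unfolding w_def by (intro Bochner_Integration.integrable_bound[OF f_int]) auto
  have tail_int: "integrable lborel (\<lambda>t. indicator (- A m) t * w t)"
    using integrable_real_mult_indicator[of "- A m" lborel w] f_int A[of m]
    unfolding w_def by (simp add: mult.commute)
  have "(\<integral>t. (norm (f t - s m t))\<^sup>2 * exp (-2 * \<rho> * t) \<partial>lborel)
      \<le> (\<integral>t. \<delta>\<^sup>2 * w t + indicator (- A m) t * w t \<partial>lborel)"
    using int tail_int f_int err unfolding w_def by (intro integral_mono) auto
  also have "\<dots> = \<delta>\<^sup>2 * I + (\<integral>t. indicator (- A m) t * w t \<partial>lborel)"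
    using tail_int f_int unfolding I_def w_def by (subst Bochner_Integration.integral_add) auto
  also have "\<dots> \<le> \<epsilon>" using \<delta>I m by simp
  finally show ?thesis using that[OF s(1,2) int] by blast
qed

section \<open>The estimate\<close>

lemma integrable_inner_weighted_simple_function:
  fixes g s :: "real \<Rightarrow> 'h::real_inner"
  assumes g: "g \<in> wL2 \<rho>" and s: "simple_function lborel s"
    and s_wL2: "(\<lambda>t. exp (-2 * \<rho> * t) *\<^sub>R s t) \<in> wL2 (-\<rho>)"
  shows "integrable lborel (\<lambda>t. inner (g t) (exp (-2 * \<rho> * t) *\<^sub>R s t))"
proof (rule Bochner_Integration.integrable_bound)
  have g_meas: "g \<in> borel_measurable lborel" using g unfolding wL2_def by auto
  have "integrable lborel (\<lambda>t. (norm (g t))\<^sup>2 * exp (-2 * \<rho> * t))"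
    using g unfolding wL2_def by auto
  moreover have "integrable lborel (\<lambda>t. (norm (exp (-2 * \<rho> * t) *\<^sub>R s t))\<^sup>2 * exp (-2 * (-\<rho>) * t))"
    using s_wL2 unfolding wL2_def by auto
  ultimately show "integrable lborel (\<lambda>t. (norm (g t))\<^sup>2 * exp (-2 * \<rho> * t)
      + (norm (exp (-2 * \<rho> * t) *\<^sub>R s t))\<^sup>2 * exp (-2 * (-\<rho>) * t))"
    by (rule Bochner_Integration.integrable_add)
  have "(\<lambda>t. (\<lambda>x v. inner x v) (g t) (s t)) \<in> borel_measurable lborel"
    by (rule borel_measurable_comb_simple_function[OF g_meas s]) (intro continuous_intros)
  then show "(\<lambda>t. inner (g t) (exp (-2 * \<rho> * t) *\<^sub>R s t)) \<in> borel_measurable lborel"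
    by simp
  show "AE t in lborel. norm (inner (g t) (exp (-2 * \<rho> * t) *\<^sub>R s t))
      \<le> norm ((norm (g t))\<^sup>2 * exp (-2 * \<rho> * t)
          + (norm (exp (-2 * \<rho> * t) *\<^sub>R s t))\<^sup>2 * exp (-2 * (-\<rho>) * t))"
  proof (rule AE_I2)
    fix t
    define e where "e = exp (-2 * \<rho> * t)"
    have e: "e > 0" "e * e * exp (2 * \<rho> * t) = e"
      unfolding e_def by (simp_all flip: exp_add)
    have "\<bar>inner (g t) (s t)\<bar> \<le> norm (g t) * norm (s t)" by (rule Cauchy_Schwarz_ineq2)
    also have "\<dots> \<le> (norm (g t))\<^sup>2 + (norm (s t))\<^sup>2"
      using sum_squares_bound[of "norm (g t)" "norm (s t)"]
        mult_nonneg_nonneg[OF norm_ge_zero norm_ge_zero, of "g t" "s t"] by linarith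
    finally have bound: "e * \<bar>inner (g t) (s t)\<bar> \<le> e * ((norm (g t))\<^sup>2 + (norm (s t))\<^sup>2)"
      using e by (intro mult_left_mono) auto
    have "(norm (e *\<^sub>R s t))\<^sup>2 * exp (-2 * (-\<rho>) * t) = (e * e * exp (2 * \<rho> * t)) * (norm (s t))\<^sup>2"
      by (simp add: power2_eq_square mult_ac)
    also have "\<dots> = e * (norm (s t))\<^sup>2" by (simp only: e(2))
    finally have "(norm (g t))\<^sup>2 * e + (norm (e *\<^sub>R s t))\<^sup>2 * exp (-2 * (-\<rho>) * t)
        = e * ((norm (g t))\<^sup>2 + (norm (s t))\<^sup>2)"
      by (simp add: algebra_simps)
    moreover have "0 \<le> e * ((norm (g t))\<^sup>2 + (norm (s t))\<^sup>2)" using e by simp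
    ultimately have "norm ((norm (g t))\<^sup>2 * e + (norm (e *\<^sub>R s t))\<^sup>2 * exp (-2 * (-\<rho>) * t))
        = e * ((norm (g t))\<^sup>2 + (norm (s t))\<^sup>2)"
      by simp
    moreover have "norm (inner (g t) (e *\<^sub>R s t)) = e * \<bar>inner (g t) (s t)\<bar>"
      using e by (simp add: abs_mult)
    ultimately show "norm (inner (g t) (exp (-2 * \<rho> * t) *\<^sub>R s t))
      \<le> norm ((norm (g t))\<^sup>2 * exp (-2 * \<rho> * t)
          + (norm (exp (-2 * \<rho> * t) *\<^sub>R s t))\<^sup>2 * exp (-2 * (-\<rho>) * t))"
      using bound unfolding e_def[symmetric] by simp
  qed
qed

lemma weighted_square_expansion_le:
  fixes a b sa sb :: "'h::real_inner" and \<rho> t :: real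
  defines "\<psi>' \<equiv> exp (-2 * \<rho> * t) *\<^sub>R (sa - sb)"
  shows "(norm (a - b))\<^sup>2 * exp (-2 * \<rho> * t) - 2 * (inner a \<psi>' - inner b \<psi>')
        + (norm \<psi>')\<^sup>2 * exp (-2 * (-\<rho>) * t)
      \<le> 2 * ((norm (a - sa))\<^sup>2 * exp (-2 * \<rho> * t)) + 2 * ((norm (b - sb))\<^sup>2 * exp (-2 * \<rho> * t))"
proof -
  define e where "e = exp (-2 * \<rho> * t)"
  define s where "s = sa - sb"
  have e: "e > 0" "e * e * exp (2 * \<rho> * t) = e"
    unfolding e_def by (simp_all flip: exp_add)
  have inner_eq: "inner a \<psi>' - inner b \<psi>' = e * inner (a - b) s"
    unfolding \<psi>'_def e_def s_def by (simp add: inner_diff_left algebra_simps)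
  have "(norm \<psi>')\<^sup>2 * exp (-2 * (-\<rho>) * t) = (e * e * exp (2 * \<rho> * t)) * (norm s)\<^sup>2"
    unfolding \<psi>'_def e_def[symmetric] s_def[symmetric] by (simp add: power2_eq_square mult_ac)
  then have norm_eq: "(norm \<psi>')\<^sup>2 * exp (-2 * (-\<rho>) * t) = e * (norm s)\<^sup>2"
    by (simp only: e(2))
  have "(a - b) - s = (a - sa) - (b - sb)" unfolding s_def by (simp add: algebra_simps)
  then have "norm ((a - b) - s) \<le> norm (a - sa) + norm (b - sb)"
    by (metis norm_triangle_ineq4)
  then have "(norm ((a - b) - s))\<^sup>2 \<le> (norm (a - sa) + norm (b - sb))\<^sup>2"
    by (rule power_mono) simp
  also have "\<dots> \<le> 2 * (norm (a - sa))\<^sup>2 + 2 * (norm (b - sb))\<^sup>2"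
    using sum_squares_bound[of "norm (a - sa)" "norm (b - sb)"] by (simp add: power2_sum)
  finally have "e * (norm ((a - b) - s))\<^sup>2 \<le> e * (2 * (norm (a - sa))\<^sup>2 + 2 * (norm (b - sb))\<^sup>2)"
    using e by (intro mult_left_mono) auto
  then have "e * (norm ((a - b) - s))\<^sup>2 \<le> 2 * ((norm (a - sa))\<^sup>2 * e) + 2 * ((norm (b - sb))\<^sup>2 * e)"
    by (simp add: algebra_simps)
  moreover have "e * (norm ((a - b) - s))\<^sup>2
      = (norm (a - b))\<^sup>2 * e - 2 * (e * inner (a - b) s) + e * (norm s)\<^sup>2"
    by (simp add: power2_norm_eq_inner inner_diff_left inner_diff_right inner_commute algebra_simps)
  ultimately show ?thesis
    unfolding inner_eq norm_eq e_def[symmetric] by linarith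
qed

text \<open>The derivative \<open>\<psi>'\<close> is chosen so that \<open>exp (2 * \<rho> * t) *\<^sub>R \<psi>' t\<close> approximates
  \<open>u t - v t\<close>; the claimed inequality is the expansion of the weighted square of that error.\<close>
lemma wnorm_diff_approx_by_derivative:
  fixes u v :: "real \<Rightarrow> 'h::real_inner"
  assumes \<rho>: "\<rho> > 0" and u: "u \<in> wL2 \<rho>" and v: "v \<in> wL2 \<rho>" and \<epsilon>: "\<epsilon> > 0"
  obtains \<psi> \<psi>' where "(\<psi>, \<psi>') \<in> wH1 (-\<rho>)"
    "(wnorm \<rho> (\<lambda>t. u t - v t))\<^sup>2 + (wnorm (-\<rho>) \<psi>')\<^sup>2
       \<le> 2 * ((\<integral>t. inner (u t) (\<psi>' t) \<partial>lborel) - (\<integral>t. inner (v t) (\<psi>' t) \<partial>lborel)) + \<epsilon>"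
proof (cases "integrable lborel (\<lambda>t. (norm (u t - v t))\<^sup>2 * exp (-2 * \<rho> * t))")
  case False
  then have "wnorm \<rho> (\<lambda>t. u t - v t) = 0"
    unfolding wnorm_def by (simp add: not_integrable_integral_eq)
  then show ?thesis
    using that[OF zero_in_wH1] \<epsilon> by (simp add: wnorm_def)
next
  case True
  obtain su nu where su: "simple_function lborel su" "\<And>t. \<bar>t\<bar> > nu \<Longrightarrow> su t = 0"
    "integrable lborel (\<lambda>t. (norm (u t - su t))\<^sup>2 * exp (-2 * \<rho> * t))"
    "(\<integral>t. (norm (u t - su t))\<^sup>2 * exp (-2 * \<rho> * t) \<partial>lborel) \<le> \<epsilon> / 4"
    using wL2_simple_approximation[OF u, of "\<epsilon> / 4"] \<epsilon> by auto
  obtain sv nv where sv: "simple_function lborel sv" "\<And>t. \<bar>t\<bar> > nv \<Longrightarrow> sv t = 0"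
    "integrable lborel (\<lambda>t. (norm (v t - sv t))\<^sup>2 * exp (-2 * \<rho> * t))"
    "(\<integral>t. (norm (v t - sv t))\<^sup>2 * exp (-2 * \<rho> * t) \<partial>lborel) \<le> \<epsilon> / 4"
    using wL2_simple_approximation[OF v, of "\<epsilon> / 4"] \<epsilon> by auto
  define s where "s t = su t - sv t" for t
  have s: "simple_function lborel s" unfolding s_def using su(1) sv(1) by auto
  have s_support: "\<bar>t\<bar> > max nu nv \<Longrightarrow> s t = 0" for t unfolding s_def using su(2) sv(2) by auto
  define \<psi>' where "\<psi>' t = exp (-2 * \<rho> * t) *\<^sub>R s t" for t
  obtain \<psi> where \<psi>: "(\<psi>, \<psi>') \<in> wH1 (-\<rho>)"
    using weighted_simple_function_is_derivative[OF \<rho> s s_support] unfolding \<psi>'_def[abs_def] by blast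
  then have \<psi>'_wL2: "\<psi>' \<in> wL2 (-\<rho>)" unfolding wH1_def by auto
  have int_u: "integrable lborel (\<lambda>t. inner (u t) (\<psi>' t))"
    and int_v: "integrable lborel (\<lambda>t. inner (v t) (\<psi>' t))"
    using integrable_inner_weighted_simple_function[OF _ s] u v \<psi>'_wL2 unfolding \<psi>'_def[abs_def]
    by auto
  have int_\<psi>': "integrable lborel (\<lambda>t. (norm (\<psi>' t))\<^sup>2 * exp (-2 * (-\<rho>) * t))"
    using \<psi>'_wL2 unfolding wL2_def by auto
  have pointwise: "(norm (u t - v t))\<^sup>2 * exp (-2 * \<rho> * t) - 2 * (inner (u t) (\<psi>' t) - inner (v t) (\<psi>' t))
        + (norm (\<psi>' t))\<^sup>2 * exp (-2 * (-\<rho>) * t)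
      \<le> 2 * ((norm (u t - su t))\<^sup>2 * exp (-2 * \<rho> * t)) + 2 * ((norm (v t - sv t))\<^sup>2 * exp (-2 * \<rho> * t))"
    for t
    unfolding \<psi>'_def s_def by (rule weighted_square_expansion_le)
  have "(wnorm \<rho> (\<lambda>t. u t - v t))\<^sup>2 - 2 * ((\<integral>t. inner (u t) (\<psi>' t) \<partial>lborel) - (\<integral>t. inner (v t) (\<psi>' t) \<partial>lborel))
        + (wnorm (-\<rho>) \<psi>')\<^sup>2
      = (\<integral>t. (norm (u t - v t))\<^sup>2 * exp (-2 * \<rho> * t) - 2 * (inner (u t) (\<psi>' t) - inner (v t) (\<psi>' t))
          + (norm (\<psi>' t))\<^sup>2 * exp (-2 * (-\<rho>) * t) \<partial>lborel)"
    unfolding wnorm_squared using True int_u int_v int_\<psi>' by simp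
  also have "\<dots> \<le> (\<integral>t. 2 * ((norm (u t - su t))\<^sup>2 * exp (-2 * \<rho> * t))
      + 2 * ((norm (v t - sv t))\<^sup>2 * exp (-2 * \<rho> * t)) \<partial>lborel)"
    using True int_u int_v int_\<psi>' su(3) sv(3) by (intro integral_mono pointwise) auto
  also have "\<dots> \<le> \<epsilon>" using su(3,4) sv(3,4) by simp
  finally show ?thesis using that[OF \<psi>] by argo
qed

lemma wnorm_diff_le_of_deriv_eq:
  fixes u v :: "real \<Rightarrow> 'h::real_inner"
  assumes \<rho>: "\<rho> > 0" and u: "u \<in> wL2 \<rho>" and v: "v \<in> wL2 \<rho>"
    and "deriv_eq \<rho> u \<Phi>" and "deriv_eq \<rho> v \<Psi>" and K: "K \<ge> 0"
    and bound: "\<And>\<psi> \<psi>'. (\<psi>, \<psi>') \<in> wH1 (-\<rho>) \<Longrightarrow> \<bar>\<Phi> \<psi> - \<Psi> \<psi>\<bar> \<le> K * wnorm (-\<rho>) \<psi>'"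
  shows "wnorm \<rho> (\<lambda>t. u t - v t) \<le> K"
proof -
  have "(wnorm \<rho> (\<lambda>t. u t - v t))\<^sup>2 \<le> K\<^sup>2 + \<epsilon>" if \<epsilon>: "\<epsilon> > 0" for \<epsilon>
  proof -
    obtain \<psi> \<psi>' where \<psi>: "(\<psi>, \<psi>') \<in> wH1 (-\<rho>)" and approx:
      "(wnorm \<rho> (\<lambda>t. u t - v t))\<^sup>2 + (wnorm (-\<rho>) \<psi>')\<^sup>2
         \<le> 2 * ((\<integral>t. inner (u t) (\<psi>' t) \<partial>lborel) - (\<integral>t. inner (v t) (\<psi>' t) \<partial>lborel)) + \<epsilon>"
      using wnorm_diff_approx_by_derivative[OF \<rho> u v \<epsilon>] by blast
    have "(\<integral>t. inner (u t) (\<psi>' t) \<partial>lborel) - (\<integral>t. inner (v t) (\<psi>' t) \<partial>lborel) = \<Psi> \<psi> - \<Phi> \<psi>"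
      using assms(4,5) \<psi> unfolding deriv_eq_def by fastforce
    also have "\<dots> \<le> K * wnorm (-\<rho>) \<psi>'" using bound[OF \<psi>] by linarith
    finally show ?thesis
      using approx sum_squares_bound[of K "wnorm (-\<rho>) \<psi>'"] unfolding mult.assoc by argo
  qed
  then have "(wnorm \<rho> (\<lambda>t. u t - v t))\<^sup>2 \<le> K\<^sup>2" by (rule field_le_epsilon)
  then show ?thesis using K by (rule power2_le_imp_le)
qed

lemma deriv_difference_bound:
  fixes F G :: "(real \<Rightarrow> 'h::real_inner) \<Rightarrow> (real \<Rightarrow> 'h) \<Rightarrow> real"
  assumes F: "\<forall>x \<in> wL2 \<rho>. F x \<in> wHm1 \<rho>" and G: "\<forall>x \<in> wL2 \<rho>. G x \<in> wHm1 \<rho>"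
    and LF: "\<exists>L. lip_bound \<rho> F L" and LG: "\<exists>L. lip_bound \<rho> G L"
    and u: "u \<in> wL2 \<rho>" and v: "v \<in> wL2 \<rho>" and \<psi>: "(\<psi>, \<psi>') \<in> wH1 (-\<rho>)"
  shows "\<bar>F u \<psi> - G v \<psi>\<bar>
    \<le> ((lip_const \<rho> F + lip_const \<rho> G) / 2 * wnorm \<rho> (\<lambda>t. u t - v t)
        + max (dnorm \<rho> (\<lambda>\<psi>. F u \<psi> - G u \<psi>)) (dnorm \<rho> (\<lambda>\<psi>. F v \<psi> - G v \<psi>)))
      * wnorm (-\<rho>) \<psi>'"
proof -
  let ?N = "wnorm \<rho> (\<lambda>t. u t - v t)" and ?M = "wnorm (-\<rho>) \<psi>'"
    and ?m = "max (dnorm \<rho> (\<lambda>\<psi>. F u \<psi> - G u \<psi>)) (dnorm \<rho> (\<lambda>\<psi>. F v \<psi> - G v \<psi>))"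
  have bound: "\<bar>A \<psi> - B \<psi>\<bar> \<le> c * ?M"
    if "A \<in> wHm1 \<rho>" "B \<in> wHm1 \<rho>" "dnorm \<rho> (\<lambda>\<psi>. A \<psi> - B \<psi>) \<le> c" for A B c
    using dnorm_bound[OF wHm1_diff[OF that(1,2)] \<psi>] that(3) wnorm_nonneg[of "-\<rho>" \<psi>']
    by (meson mult_right_mono order_trans)
  have "\<bar>F u \<psi> - F v \<psi>\<bar> \<le> lip_const \<rho> F * ?N * ?M"
    using bound lip_bound_lip_const[OF LF] F u v unfolding lip_bound_def by blast
  moreover have "\<bar>G u \<psi> - G v \<psi>\<bar> \<le> lip_const \<rho> G * ?N * ?M"
    using bound lip_bound_lip_const[OF LG] G u v unfolding lip_bound_def by blast
  moreover have "\<bar>F v \<psi> - G v \<psi>\<bar> \<le> ?m * ?M" and "\<bar>F u \<psi> - G u \<psi>\<bar> \<le> ?m * ?M"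
    using F G u v by (auto intro!: bound)
  moreover have "((lip_const \<rho> F + lip_const \<rho> G) / 2 * ?N + ?m) * ?M
      = (lip_const \<rho> F * ?N * ?M + lip_const \<rho> G * ?N * ?M) / 2 + ?m * ?M"
    by (simp add: algebra_simps)
  ultimately show ?thesis unfolding abs_le_iff by argo
qed

theorem theorem3p6:
  fixes F G :: "(real \<Rightarrow> 'h::{real_inner, complete_space}) \<Rightarrow> ((real \<Rightarrow> 'h) \<Rightarrow> real)"
    and u v :: "real \<Rightarrow> 'h" and \<rho> :: real
  assumes "\<rho> > 0"
    and "\<forall>x \<in> wL2 \<rho>. F x \<in> wHm1 \<rho>"
    and "\<forall>x \<in> wL2 \<rho>. G x \<in> wHm1 \<rho>"
    and "\<exists>L. lip_bound \<rho> F L"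
    and "\<exists>L. lip_bound \<rho> G L"
    and "(lip_const \<rho> F + lip_const \<rho> G) / 2 < 1"
    and "u \<in> wL2 \<rho>" and "v \<in> wL2 \<rho>"
    and "deriv_eq \<rho> u (F u)"
    and "deriv_eq \<rho> v (G v)"
  shows "ereal (wnorm \<rho> (\<lambda>t. u t - v t))
           \<le> ereal (1 / (1 - (lip_const \<rho> F + lip_const \<rho> G) / 2))
              * (SUP x \<in> wL2 \<rho>. ereal (dnorm \<rho> (\<lambda>\<psi>. F x \<psi> - G x \<psi>)))"
proof -
  define k where "k = (lip_const \<rho> F + lip_const \<rho> G) / 2"
  define m where "m = max (dnorm \<rho> (\<lambda>\<psi>. F u \<psi> - G u \<psi>)) (dnorm \<rho> (\<lambda>\<psi>. F v \<psi> - G v \<psi>))"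
  define N where "N = wnorm \<rho> (\<lambda>t. u t - v t)"
  have k: "0 \<le> k" "k < 1"
    using lip_const_nonneg[OF assms(4)] lip_const_nonneg[OF assms(5)] assms(6) unfolding k_def by auto
  have "0 \<le> dnorm \<rho> (\<lambda>\<psi>. F u \<psi> - G u \<psi>)"
    using assms(2,3,7) by (intro dnorm_nonneg wHm1_diff) auto
  then have "0 \<le> m" unfolding m_def by (simp add: le_max_iff_disj)
  have "N \<le> k * N + m"
    unfolding N_def
  proof (rule wnorm_diff_le_of_deriv_eq[OF assms(1,7,8,9,10)])
    show "0 \<le> k * wnorm \<rho> (\<lambda>t. u t - v t) + m"
      using \<open>0 \<le> m\<close> by (intro add_nonneg_nonneg mult_nonneg_nonneg k(1) wnorm_nonneg)
    show "\<bar>F u \<psi> - G v \<psi>\<bar> \<le> (k * wnorm \<rho> (\<lambda>t. u t - v t) + m) * wnorm (-\<rho>) \<psi>'"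
      if "(\<psi>, \<psi>') \<in> wH1 (-\<rho>)" for \<psi> \<psi>'
      unfolding k_def m_def by (rule deriv_difference_bound[OF assms(2-5,7,8) that])
  qed
  then have "N \<le> m / (1 - k)" using k by (simp add: le_divide_eq algebra_simps)
  then have "ereal N \<le> ereal (1 / (1 - k)) * ereal m" by (simp add: divide_inverse mult.commute)
  also have "\<dots> \<le> ereal (1 / (1 - k)) * (SUP x \<in> wL2 \<rho>. ereal (dnorm \<rho> (\<lambda>\<psi>. F x \<psi> - G x \<psi>)))"
  proof (rule ereal_mult_left_mono)
    have "ereal (dnorm \<rho> (\<lambda>\<psi>. F x \<psi> - G x \<psi>)) \<le> (SUP x \<in> wL2 \<rho>. ereal (dnorm \<rho> (\<lambda>\<psi>. F x \<psi> - G x \<psi>)))"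
      if "x \<in> wL2 \<rho>" for x
      using that by (rule SUP_upper)
    then show "ereal m \<le> (SUP x \<in> wL2 \<rho>. ereal (dnorm \<rho> (\<lambda>\<psi>. F x \<psi> - G x \<psi>)))"
      unfolding m_def using assms(7,8) by (simp add: max_def)
  qed (use k in simp)
  finally show ?thesis unfolding N_def k_def .
qed

end
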